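(* Let $I\subseteq[m-1]$ and $J\subseteq[n-1]$. Then $\mathbf m(\kappa_I(\nu),\kappa_J(\nu))=\sum_{K\subseteq[m+n-1]}d_K\,\kappa_K(\nu)$, where $$d_K=\sum_{\substack{A\subseteq[m+n],\ |A|=n:\\ (I\#_AJ)\cap c(A)=\emptyset\\ I\#_AJ\subseteq K\subseteq(I\#_AJ)\cup c(A)}}\left(\frac{1}{1-\nu}\right)^{|K\cap c_2(A)|}.$$
   Context: Fix an integer $\nu>1$ and nonnegative integers $m,n$; $C_\nu$ is the additive cyclic group of order $\nu$. $[a,b]=\{t\in\mathbb Z:a\le t\le b\}$ (empty if $a>b$), $[n]=[1,n]$. $Q_S(\nu)=\bigoplus_{s\in S}C_\nu$; $Q_n(\nu)=Q_{[n-1]}(\nu)$. For $K\subseteq[N-1]$, $\kappa_K(\nu)$ is the function on $Q_N(\nu)$ equal to $1$ at $\mathbf g$ if $\{i:g_i\neq0\}=K$ and $0$ otherwise (superclass identifier). $\psi_\nu(0)=1$, $\psi_\nu(g)=-1/(\nu-1)$ for $g\ne0$. Connectivity: for $A\subseteq[N]$, $\mathrm{conn}(A)$ = maximal subsets of consecutive integers of $A$; $A^c=[N]\setminus A$; $c_1(A)=\{\max B:B\in\mathrm{conn}(A)\}\setminus\{N\}$, $c_2(A)=\{\max B:B\in\mathrm{conn}(A^c)\}\setminus\{N\}$, $c(A)=c_1(A)\cup c_2(A)$; here $N=m+n$. For $A\subseteq[m+n]$ with $|A|=n$, write $A=\{b_1<\dots<b_n\}$, $[m+n]\setminus A=\{a_1<\dots<a_m\}$;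 $I\#_AJ=\{a_i:i\in I\}\cup\{b_j:j\in J\}$. Product: for functions $\phi$ on $Q_m(\nu)$, $\psi$ on $Q_n(\nu)$: if $m=0$ or $n=0$, $\mathbf m_A(\phi,\psi)=\phi\psi$; otherwise $\mathbf m_A(\phi,\psi)(\mathbf g)=\prod_{i\in c_2(A)}\psi_\nu(g_i)\cdot s_A(\phi,\psi)(\mathbf g')$ for $\mathbf g\in Q_{m+n}(\nu)$, with $s_A(\phi,\psi)(\mathbf h)=\phi(h_{a_1},\dots,h_{a_{m-1}})\psi_\nu(h_{a_m})\psi(h_{b_1},\dots,h_{b_{n-1}})\psi_\nu(h_{b_n})$ on $Q_{[m+n]}(\nu)$ and $\mathbf g'$ equal to $\mathbf g$ on $[m+n-1]\setminus c(A)$ and $0$ on $c(A)\cup\{m+n\}$. $\mathbf m=\sum_A\mathbf m_A$ over all $n$-subsets $A$ of $[m+n]$. *)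

theory Defs
  imports Complex_Main
begin

text \<open>Elements of Q_S(nu) = direct sum over S of C_nu, with C_nu = {0,...,nu-1};
  represented as functions nat => nat supported on S.\<close>
definition QS :: "nat set \<Rightarrow> nat \<Rightarrow> (nat \<Rightarrow> nat) set" where
  "QS S \<nu> = {g. \<forall>i. (i \<in> S \<longrightarrow> g i < \<nu>) \<and> (i \<notin> S \<longrightarrow> g i = 0)}"

definition Qn :: "nat \<Rightarrow> nat \<Rightarrow> (nat \<Rightarrow> nat) set" where
  "Qn N \<nu> = QS {1..N - 1} \<nu>"

definition kappa :: "nat \<Rightarrow> nat set \<Rightarrow> (nat \<Rightarrow> nat) \<Rightarrow> real" where
  "kappa N K g = (if {i \<in> {1..N - 1}. g i \<noteq> 0} = K then 1 else 0)"

definition psi :: "nat \<Rightarrow> nat \<Rightarrow> real" where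
  "psi \<nu> x = (if x = 0 then 1 else - 1 / (real \<nu> - 1))"

definition conn :: "nat set \<Rightarrow> nat set set" where
  "conn A = {B. B \<noteq> {} \<and> B \<subseteq> A \<and> (\<exists>a b. B = {a..b}) \<and>
      (\<forall>C. C \<subseteq> A \<and> (\<exists>a b. C = {a..b}) \<and> B \<subseteq> C \<longrightarrow> C = B)}"

definition c1 :: "nat \<Rightarrow> nat set \<Rightarrow> nat set" where
  "c1 N A = (Max ` conn A) - {N}"

definition c2 :: "nat \<Rightarrow> nat set \<Rightarrow> nat set" where
  "c2 N A = (Max ` conn ({1..N} - A)) - {N}"

definition cc :: "nat \<Rightarrow> nat set \<Rightarrow> nat set" where
  "cc N A = c1 N A \<union> c2 N A"

text \<open>For A = {b_1 < ... < b_n} and [m+n] - A = {a_1 < ... < a_m}: a_i and b_j.\<close>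
definition aelt :: "nat \<Rightarrow> nat \<Rightarrow> nat set \<Rightarrow> nat \<Rightarrow> nat" where
  "aelt m n A i = sorted_list_of_set ({1..m+n} - A) ! (i - 1)"

definition belt :: "nat set \<Rightarrow> nat \<Rightarrow> nat" where
  "belt A j = sorted_list_of_set A ! (j - 1)"

definition sharp :: "nat \<Rightarrow> nat \<Rightarrow> nat set \<Rightarrow> nat set \<Rightarrow> nat set \<Rightarrow> nat set" where
  "sharp m n A I J = aelt m n A ` I \<union> belt A ` J"

definition sA :: "nat \<Rightarrow> nat \<Rightarrow> nat \<Rightarrow> nat set \<Rightarrow> ((nat \<Rightarrow> nat) \<Rightarrow> real)
    \<Rightarrow> ((nat \<Rightarrow> nat) \<Rightarrow> real) \<Rightarrow> (nat \<Rightarrow> nat) \<Rightarrow> real" where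
  "sA \<nu> m n A \<phi> \<psi> h =
     \<phi> (\<lambda>i. if i \<in> {1..m - 1} then h (aelt m n A i) else 0) * psi \<nu> (h (aelt m n A m)) *
     \<psi> (\<lambda>j. if j \<in> {1..n - 1} then h (belt A j) else 0) * psi \<nu> (h (belt A n))"

definition mA :: "nat \<Rightarrow> nat \<Rightarrow> nat \<Rightarrow> nat set \<Rightarrow> ((nat \<Rightarrow> nat) \<Rightarrow> real)
    \<Rightarrow> ((nat \<Rightarrow> nat) \<Rightarrow> real) \<Rightarrow> (nat \<Rightarrow> nat) \<Rightarrow> real" where
  "mA \<nu> m n A \<phi> \<psi> g =
     (if m = 0 then \<phi> (\<lambda>_. 0) * \<psi> g
      else if n = 0 then \<phi> g * \<psi> (\<lambda>_. 0)
      else (\<Prod>i\<in>c2 (m+n) A. psi \<nu> (g i)) *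
        sA \<nu> m n A \<phi> \<psi>
          (\<lambda>i. if i \<in> {1..m+n-1} - cc (m+n) A then g i else 0))"

definition mprod :: "nat \<Rightarrow> nat \<Rightarrow> nat \<Rightarrow> ((nat \<Rightarrow> nat) \<Rightarrow> real)
    \<Rightarrow> ((nat \<Rightarrow> nat) \<Rightarrow> real) \<Rightarrow> (nat \<Rightarrow> nat) \<Rightarrow> real" where
  "mprod \<nu> m n \<phi> \<psi> g =
     (\<Sum>A\<in>{A. A \<subseteq> {1..m+n} \<and> card A = n}. mA \<nu> m n A \<phi> \<psi> g)"

end

theory Submission
  imports Defs
begin

(* For a fixed n-subset A, the term m_A(kappa_I, kappa_J) at g is the product of the psi-weights
   on c_2(A), which give (1/(1-nu))^|supp g \<inter> c_2(A)|, and s_A evaluated at the restriction g'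
   of g to [m+n-1] - c(A).  The last elements a_m = max A^c and b_n = max A are tops of maximal
   runs of A^c and A, so they lie in c(A) \<union> {m+n} and g' vanishes there: the two psi-factors
   of s_A are 1, and its two kappa-factors together say exactly that supp g - c(A) = I #_A J.
   Summing over A, only K = supp g survives on the right-hand side.  The identity holds for
   every g. *)

lemma nth_sorted_list_of_set_atLeastAtMost:
  "j \<in> {1..k} \<Longrightarrow> sorted_list_of_set {1..k} ! (j - 1) = (j::nat)"
  by (simp add: atLeastLessThanSuc_atLeastAtMost[symmetric] del: upt_Suc)

lemma bij_betw_nth_sorted_list_of_set:
  assumes "finite X"
  shows "bij_betw (\<lambda>i. sorted_list_of_set X ! (i - 1)) {1..card X} X"
proof -
  have "bij_betw (\<lambda>i. i - 1) {1..card X} {..<card X}"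
    by (rule bij_betw_byWitness[where f' = Suc]) auto
  moreover have "bij_betw ((!) (sorted_list_of_set X)) {..<card X} X"
    by (rule bij_betw_nth) (use assms in auto)
  ultimately show ?thesis
    by (auto dest: bij_betw_trans simp: comp_def)
qed

lemma nth_sorted_list_of_set_last:
  fixes X :: "'a::linorder set"
  assumes "finite X" "X \<noteq> {}"
  shows "sorted_list_of_set X ! (card X - 1) = Max X"
proof (rule Max_eqI[symmetric])
  let ?xs = "sorted_list_of_set X"
  have len: "length ?xs = card X" and "card X > 0" using assms by auto
  show "?xs ! (card X - 1) \<in> X"
    using assms nth_mem[of "card X - 1" ?xs] len \<open>card X > 0\<close> by simp
  fix x assume "x \<in> X"
  then obtain j where "j < card X" "x = ?xs ! j"
    using assms len by (metis in_set_conv_nth set_sorted_list_of_set)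
  then show "x \<le> ?xs ! (card X - 1)"
    using sorted_nth_mono[OF sorted_sorted_list_of_set, of j "card X - 1" X] len by simp
qed (use assms in auto)

lemma enumeration_preimage_eq_iff:
  fixes k :: nat
  assumes f: "bij_betw f {1..k} X" and last: "f k \<notin> T" and I: "I \<subseteq> {1..k - 1}"
  shows "{i \<in> {1..k - 1}. f i \<in> T} = I \<longleftrightarrow> T \<inter> X = f ` I"
proof -
  have "{i \<in> {1..k}. f i \<in> T} = {i \<in> {1..k - 1}. f i \<in> T}"
    using last by (auto simp: le_diff_conv2) (metis Suc_leI le_neq_implies_less)
  moreover have "X = f ` {1..k}" using f by (simp add: bij_betw_def)
  ultimately have T_X: "T \<inter> X = f ` {i \<in> {1..k - 1}. f i \<in> T}" by auto
  have "inj_on f {1..k - 1}" using bij_betw_imp_inj_on[OF f] by (rule inj_on_subset) auto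
  then have "{i \<in> {1..k - 1}. f i \<in> T} = I \<longleftrightarrow> f ` {i \<in> {1..k - 1}. f i \<in> T} = f ` I"
    using I by (intro inj_on_image_eq_iff[symmetric]) auto
  with T_X show ?thesis by simp
qed

lemma Un_eq_iff_Int_eq:
  "T \<subseteq> X \<union> Y \<Longrightarrow> X \<inter> Y = {} \<Longrightarrow> P \<subseteq> X \<Longrightarrow> Q \<subseteq> Y \<Longrightarrow>
    T = P \<union> Q \<longleftrightarrow> T \<inter> X = P \<and> T \<inter> Y = Q"
  by blast

lemma Max_in_Max_conn:
  fixes X :: "nat set"
  assumes "finite X" "X \<noteq> {}"
  shows "Max X \<in> Max ` conn X"
proof -
  let ?x = "Max X"
  define a where "a = (LEAST a. {a..?x} \<subseteq> X)"
  have x_in: "{?x..?x} \<subseteq> X" using assms by simp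
  have a_interval: "{a..?x} \<subseteq> X" unfolding a_def by (rule LeastI[of "\<lambda>a. {a..?x} \<subseteq> X", OF x_in])
  have a_least: "a \<le> a'" if "{a'..?x} \<subseteq> X" for a' unfolding a_def using that by (rule Least_le)
  have "a \<le> ?x" using a_least[OF x_in] .
  have "{a..?x} \<in> conn X"
    unfolding conn_def
  proof (intro CollectI conjI allI impI)
    fix C assume C: "C \<subseteq> X \<and> (\<exists>a b. C = {a..b}) \<and> {a..?x} \<subseteq> C"
    then obtain a' b where C_eq: "C = {a'..b}" by blast
    with C \<open>a \<le> ?x\<close> have "a' \<le> a" "?x \<le> b" by auto
    with C C_eq \<open>a \<le> ?x\<close> have "b \<in> X" by auto
    then have "b \<le> ?x" using assms by simp
    with C C_eq \<open>?x \<le> b\<close> have "a \<le> a'" by (intro a_least) auto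
    show "C = {a..?x}" using C_eq \<open>a' \<le> a\<close> \<open>a \<le> a'\<close> \<open>?x \<le> b\<close> \<open>b \<le> ?x\<close> by simp
  qed (use \<open>a \<le> ?x\<close> a_interval in auto)
  moreover have "Max {a..?x} = ?x" using \<open>a \<le> ?x\<close> by (intro Max_eqI) auto
  ultimately show ?thesis by (intro rev_image_eqI[of "{a..?x}"]) simp_all
qed

lemma conn_empty [simp]: "conn {} = {}"
  unfolding conn_def by auto

lemma Max_conn_atLeastAtMost: "Max ` conn {1..N} \<subseteq> {N}"
proof
  fix x assume "x \<in> Max ` conn {1..N}"
  then obtain B where B: "B \<in> conn {1..N}" "x = Max B" by blast
  then have "B = {1..N}" "B \<noteq> {}" unfolding conn_def by auto
  with B show "x \<in> {N}" by (auto intro!: Max_eqI)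
qed

lemma conn_memD: "B \<in> conn X \<Longrightarrow> B \<subseteq> X \<and> B \<noteq> {} \<and> finite B"
  unfolding conn_def by auto

lemma c2_subset: "c2 N A \<subseteq> {1..N - 1}"
proof
  fix x assume "x \<in> c2 N A"
  then obtain B where B: "B \<in> conn ({1..N} - A)" "x = Max B" "x \<noteq> N"
    unfolding c2_def by auto
  then have "x \<in> {1..N}" using conn_memD[OF B(1)] Max_in by blast
  with \<open>x \<noteq> N\<close> show "x \<in> {1..N - 1}" by auto
qed

lemma c1_empty [simp]: "c1 N {} = {}"
  by (simp add: c1_def)

lemma c2_empty [simp]: "c2 N {} = {}"
  using Max_conn_atLeastAtMost[of N] by (auto simp: c2_def)

lemma c1_atLeastAtMost [simp]: "c1 N {1..N} = {}"
  using Max_conn_atLeastAtMost[of N] by (auto simp: c1_def)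

lemma c2_atLeastAtMost [simp]: "c2 N {1..N} = {}"
  by (simp add: c2_def)

lemma Max_in_c1:
  "finite A \<Longrightarrow> A \<noteq> {} \<Longrightarrow> Max A \<in> c1 N A \<union> {N}"
  using Max_in_Max_conn unfolding c1_def by blast

lemma Max_diff_in_c2:
  "{1..N} - A \<noteq> {} \<Longrightarrow> Max ({1..N} - A) \<in> c2 N A \<union> {N}"
  using Max_in_Max_conn[of "{1..N} - A"] unfolding c2_def by blast

lemma card_diff_atLeastAtMost:
  "A \<subseteq> {1..m+n} \<Longrightarrow> card A = n \<Longrightarrow> card ({1..m+n} - A) = m"
  using finite_subset[of A "{1..m+n}"] by (simp add: card_Diff_subset)

lemma bij_betw_aelt:
  "A \<subseteq> {1..m+n} \<Longrightarrow> card A = n \<Longrightarrow> bij_betw (aelt m n A) {1..m} ({1..m+n} - A)"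
  using bij_betw_nth_sorted_list_of_set[of "{1..m+n} - A"] card_diff_atLeastAtMost[of A m n]
  unfolding aelt_def by simp

lemma bij_betw_belt: "finite A \<Longrightarrow> bij_betw (belt A) {1..card A} A"
  unfolding belt_def by (rule bij_betw_nth_sorted_list_of_set)

lemma aelt_last_mem:
  assumes "A \<subseteq> {1..m+n}" "card A = n" "m \<noteq> 0"
  shows "aelt m n A m \<in> c2 (m+n) A \<union> {m+n}"
proof -
  have card: "card ({1..m+n} - A) = m" using assms(1,2) by (rule card_diff_atLeastAtMost)
  then have "{1..m+n} - A \<noteq> {}" using assms(3) by (metis card.empty)
  then show ?thesis
    using nth_sorted_list_of_set_last[of "{1..m+n} - A"] Max_diff_in_c2[of "m+n" A] card
    unfolding aelt_def by simp
qed

lemma belt_last_mem: "finite A \<Longrightarrow> A \<noteq> {} \<Longrightarrow> belt A (card A) \<in> c1 N A \<union> {N}"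
  unfolding belt_def using nth_sorted_list_of_set_last Max_in_c1 by metis

definition support :: "nat \<Rightarrow> (nat \<Rightarrow> nat) \<Rightarrow> nat set" where
  "support N g = {i \<in> {1..N - 1}. g i \<noteq> 0}"

lemma kappa_eq_support: "kappa N K g = (if support N g = K then 1 else 0)"
  by (simp add: kappa_def support_def)

lemma kappa_restrict:
  "kappa k I (\<lambda>i. if i \<in> {1..k - 1} then h i else 0) = (if {i \<in> {1..k - 1}. h i \<noteq> 0} = I then 1 else 0)"
proof -
  have "{i \<in> {1..k - 1}. (if i \<in> {1..k - 1} then h i else 0) \<noteq> 0} = {i \<in> {1..k - 1}. h i \<noteq> 0}"
    by auto
  then show ?thesis unfolding kappa_def by simp
qed

lemma sum_Pow_kappa: "(\<Sum>K\<in>Pow {1..N - 1}. d K * kappa N K g) = d (support N g)"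
proof -
  have "(\<Sum>K\<in>Pow {1..N - 1}. d K * kappa N K g) =
      (\<Sum>K\<in>Pow {1..N - 1}. if support N g = K then d K else 0)"
    by (intro sum.cong) (auto simp: kappa_eq_support)
  also have "\<dots> = d (support N g)"
    using sum.delta'[of "Pow {1..N - 1}" "support N g" d] by (auto simp: support_def)
  finally show ?thesis .
qed

lemma psi_eq: "psi \<nu> x = (if x = 0 then 1 else 1 / (1 - real \<nu>))"
proof -
  have "1 / (1 - real \<nu>) = - 1 / (real \<nu> - 1)"
    by (metis minus_diff_eq divide_minus_right minus_divide_left)
  then show ?thesis unfolding psi_def by simp
qed

lemma prod_psi_eq_power:
  assumes "finite C"
  shows "(\<Prod>i\<in>C. psi \<nu> (g i)) = (1 / (1 - real \<nu>)) ^ card {i \<in> C. g i \<noteq> 0}"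
proof -
  have "C \<inter> - {i. g i = 0} = {i \<in> C. g i \<noteq> 0}" by auto
  with assms show ?thesis by (simp add: psi_eq prod.If_cases)
qed

lemma mA_kappa_kappa_left_zero:
  assumes "m = 0" "A \<subseteq> {1..m+n}" "card A = n" "I \<subseteq> {1..m - 1}" "J \<subseteq> {1..n - 1}"
  shows "mA \<nu> m n A (kappa m I) (kappa n J) g =
    (if support (m+n) g - cc (m+n) A = sharp m n A I J
     then (1 / (1 - real \<nu>)) ^ card (support (m+n) g \<inter> c2 (m+n) A) else 0)"
proof -
  have A: "A = {1..n}" using assms by (intro card_subset_eq) auto
  have "belt A j = j" if "j \<in> J" for j
  proof -
    have "j \<in> {1..n}" using that assms(5) by fastforce
    then show ?thesis unfolding A belt_def by (rule nth_sorted_list_of_set_atLeastAtMost)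
  qed
  then have "sharp m n A I J = J" using assms by (simp add: sharp_def cong: image_cong)
  moreover have "cc (m+n) A = {}" "c2 (m+n) A = {}"
    unfolding A \<open>m = 0\<close> add_0 cc_def c1_atLeastAtMost c2_atLeastAtMost by simp_all
  ultimately show ?thesis using assms by (simp add: mA_def kappa_eq_support support_def)
qed

lemma mA_kappa_kappa_right_zero:
  assumes "m \<noteq> 0" "n = 0" "A \<subseteq> {1..m+n}" "card A = n" "I \<subseteq> {1..m - 1}" "J \<subseteq> {1..n - 1}"
  shows "mA \<nu> m n A (kappa m I) (kappa n J) g =
    (if support (m+n) g - cc (m+n) A = sharp m n A I J
     then (1 / (1 - real \<nu>)) ^ card (support (m+n) g \<inter> c2 (m+n) A) else 0)"
proof -
  have A: "A = {}" using assms by (metis card_0_eq finite_atLeastAtMost finite_subset)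
  have "aelt m n A i = i" if "i \<in> I" for i
  proof -
    have "i \<in> {1..m}" using that assms(5) by fastforce
    then show ?thesis
      unfolding A aelt_def \<open>n = 0\<close> add_0_right Diff_empty by (rule nth_sorted_list_of_set_atLeastAtMost)
  qed
  then have "sharp m n A I J = I" using assms by (simp add: sharp_def cong: image_cong)
  moreover have "cc (m+n) A = {}" "c2 (m+n) A = {}"
    unfolding A cc_def c1_empty c2_empty by simp_all
  ultimately show ?thesis using assms by (simp add: mA_def kappa_eq_support support_def)
qed

lemma sA_kappa_kappa:
  assumes A: "A \<subseteq> {1..m+n}" "card A = n" and I: "I \<subseteq> {1..m - 1}" and J: "J \<subseteq> {1..n - 1}"
    and last: "h (aelt m n A m) = 0" "h (belt A n) = 0" and supp: "{i. h i \<noteq> 0} \<subseteq> {1..m+n}"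
  shows "sA \<nu> m n A (kappa m I) (kappa n J) h = (if {i. h i \<noteq> 0} = sharp m n A I J then 1 else 0)"
proof -
  define T where "T = {i. h i \<noteq> 0}"
  define X where "X = {1..m+n} - A"
  define a where "a = aelt m n A"
  define b where "b = belt A"
  have "finite A" using A(1) by (rule finite_subset) simp
  have a_bij: "bij_betw a {1..m} X" unfolding a_def X_def using A by (rule bij_betw_aelt)
  have b_bij: "bij_betw b {1..n} A" unfolding b_def using bij_betw_belt[OF \<open>finite A\<close>] A(2) by simp
  have a_last: "a m \<notin> T" and b_last: "b n \<notin> T" using last unfolding T_def a_def b_def by auto
  have sharp_eq: "sharp m n A I J = a ` I \<union> b ` J" unfolding sharp_def a_def b_def ..
  have sharp_iff: "T = sharp m n A I J \<longleftrightarrow> T \<inter> X = a ` I \<and> T \<inter> A = b ` J"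
    unfolding sharp_eq
  proof (rule Un_eq_iff_Int_eq)
    show "a ` I \<subseteq> X" "b ` J \<subseteq> A"
      using a_bij b_bij I J by (fastforce simp: bij_betw_def)+
    show "T \<subseteq> X \<union> A" using supp unfolding T_def X_def by auto
  qed (auto simp: X_def)
  have "kappa m I (\<lambda>i. if i \<in> {1..m - 1} then h (a i) else 0) =
      (if {i \<in> {1..m - 1}. a i \<in> T} = I then 1 else 0)"
    unfolding kappa_restrict T_def by simp
  moreover have "kappa n J (\<lambda>j. if j \<in> {1..n - 1} then h (b j) else 0) =
      (if {j \<in> {1..n - 1}. b j \<in> T} = J then 1 else 0)"
    unfolding kappa_restrict T_def by simp
  ultimately show ?thesis
    using last unfolding sA_def a_def[symmetric] b_def[symmetric] T_def[symmetric] sharp_iff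
      enumeration_preimage_eq_iff[OF a_bij a_last I] enumeration_preimage_eq_iff[OF b_bij b_last J]
    by (simp add: psi_def)
qed

lemma mA_kappa_kappa_pos:
  assumes m: "m \<noteq> 0" and n: "n \<noteq> 0" and A: "A \<subseteq> {1..m+n}" "card A = n"
    and I: "I \<subseteq> {1..m - 1}" and J: "J \<subseteq> {1..n - 1}"
  shows "mA \<nu> m n A (kappa m I) (kappa n J) g =
    (if support (m+n) g - cc (m+n) A = sharp m n A I J
     then (1 / (1 - real \<nu>)) ^ card (support (m+n) g \<inter> c2 (m+n) A) else 0)"
proof -
  define N where "N = m + n"
  define g' where "g' = (\<lambda>i. if i \<in> {1..N - 1} - cc N A then g i else 0)"
  have supp_g': "{i. g' i \<noteq> 0} = support N g - cc N A" unfolding g'_def support_def by auto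
  have "finite A" "A \<noteq> {}" using A n finite_subset by auto
  have "g' (aelt m n A m) = 0"
    using aelt_last_mem[OF A m] unfolding g'_def N_def cc_def by auto
  moreover have "g' (belt A n) = 0"
    using belt_last_mem[OF \<open>finite A\<close> \<open>A \<noteq> {}\<close>, of N] A(2) unfolding g'_def cc_def by auto
  moreover have "{i. g' i \<noteq> 0} \<subseteq> {1..m+n}" unfolding supp_g' support_def N_def by auto
  ultimately have sA_eq: "sA \<nu> m n A (kappa m I) (kappa n J) g' =
      (if support N g - cc N A = sharp m n A I J then 1 else 0)"
    using sA_kappa_kappa[OF A I J] supp_g' by simp
  have "{i \<in> c2 N A. g i \<noteq> 0} = support N g \<inter> c2 N A"
    using c2_subset unfolding support_def by blast
  then have "(\<Prod>i\<in>c2 N A. psi \<nu> (g i)) = (1 / (1 - real \<nu>)) ^ card (support N g \<inter> c2 N A)"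
    using prod_psi_eq_power[OF finite_subset[OF c2_subset]] by simp
  with sA_eq m n show ?thesis unfolding mA_def g'_def N_def by simp
qed

lemma mA_kappa_kappa:
  assumes "A \<subseteq> {1..m+n}" "card A = n" "I \<subseteq> {1..m - 1}" "J \<subseteq> {1..n - 1}"
  shows "mA \<nu> m n A (kappa m I) (kappa n J) g =
    (if support (m+n) g - cc (m+n) A = sharp m n A I J
     then (1 / (1 - real \<nu>)) ^ card (support (m+n) g \<inter> c2 (m+n) A) else 0)"
proof (cases "m = 0")
  case True
  then show ?thesis by (rule mA_kappa_kappa_left_zero[OF _ assms])
next
  case False
  show ?thesis
  proof (cases "n = 0")
    case True
    with \<open>m \<noteq> 0\<close> show ?thesis by (rule mA_kappa_kappa_right_zero[OF _ _ assms])
  next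
    case False
    with \<open>m \<noteq> 0\<close> show ?thesis by (rule mA_kappa_kappa_pos[OF _ _ assms])
  qed
qed

theorem proposition3p15:
  fixes \<nu> m n :: nat and I J :: "nat set"
  assumes "\<nu> > 1"
    and "I \<subseteq> {1..m - 1}" and "J \<subseteq> {1..n - 1}"
  shows "\<forall>g \<in> Qn (m+n) \<nu>.
    mprod \<nu> m n (kappa m I) (kappa n J) g =
    (\<Sum>K\<in>Pow {1..m+n-1}.
       (\<Sum>A\<in>{A. A \<subseteq> {1..m+n} \<and> card A = n \<and>
                 sharp m n A I J \<inter> cc (m+n) A = {} \<and>
                 sharp m n A I J \<subseteq> K \<and> K \<subseteq> sharp m n A I J \<union> cc (m+n) A}.
          (1 / (1 - real \<nu>)) ^ card (K \<inter> c2 (m+n) A)) * kappa (m+n) K g)"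
proof
  fix g
  let ?S = "support (m+n) g"
  let ?d = "\<lambda>K. \<Sum>A\<in>{A. A \<subseteq> {1..m+n} \<and> card A = n \<and>
                 sharp m n A I J \<inter> cc (m+n) A = {} \<and>
                 sharp m n A I J \<subseteq> K \<and> K \<subseteq> sharp m n A I J \<union> cc (m+n) A}.
          (1 / (1 - real \<nu>)) ^ card (K \<inter> c2 (m+n) A)"
  let ?As = "{A. A \<subseteq> {1..m+n} \<and> card A = n}"
  have "finite ?As" by (rule finite_subset[of _ "Pow {1..m+n}"]) auto
  have "mprod \<nu> m n (kappa m I) (kappa n J) g = (\<Sum>A\<in>?As.
      if ?S - cc (m+n) A = sharp m n A I J then (1 / (1 - real \<nu>)) ^ card (?S \<inter> c2 (m+n) A) else 0)"
    unfolding mprod_def using assms by (intro sum.cong) (auto simp: mA_kappa_kappa)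
  also have "\<dots> = (\<Sum>A\<in>{A \<in> ?As. ?S - cc (m+n) A = sharp m n A I J}.
      (1 / (1 - real \<nu>)) ^ card (?S \<inter> c2 (m+n) A))"
    by (rule sum.inter_filter[OF \<open>finite ?As\<close>, symmetric])
  also have "\<dots> = ?d ?S" by (intro sum.cong) auto
  also have "\<dots> = (\<Sum>K\<in>Pow {1..m+n-1}. ?d K * kappa (m+n) K g)"
    by (rule sum_Pow_kappa[symmetric])
  finally show "mprod \<nu> m n (kappa m I) (kappa n J) g = (\<Sum>K\<in>Pow {1..m+n-1}. ?d K * kappa (m+n) K g)" .
qed

end
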